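(* Let $t\geqslant 2$, $r\in\{2t,2t+1\}$ and $n\geqslant 2r-1$. Consider the permutations $I^\ell$, defined for $\ell=2s-1$ with $2\leqslant s\leqslant r$ and for $\ell=2s$ with $2\leqslant s\leqslant r-2$. Then the maximum of $|B_r(I^\ell)\cap B_r(I_n)|$ over all these values of $\ell$ equals $$2\binom{2t-3}{t}+\ell^*\binom{2t-2}{t-1}.$$ This maximum is attained at $\ell=\ell^*$, where $\ell^*=5$ if $r=2t$ and $\ell^*=7$ if $r=2t+1$.
   Context: $\mathrm{Sym}_n$ is the symmetric group on $[n]$, $I_n$ is the identity, the Hamming distance is $d(\pi,\tau)=|\{i:\pi(i)\neq\tau(i)\}|$, and $B_r(\pi)=\{\sigma:d(\sigma,\pi)\leqslant r\}$. For $\ell=2s-1$ ($2\leqslant s\leqslant r$), $I^\ell\in\mathrm{Sym}_n$ denotes a permutation whose non-trivial cycles are one $\ell$-cycle and $r-s$ transpositions. For $\ell=2s$ ($2\leqslant s\leqslant r-2$), $I^\ell$ denotes a permutation whose non-trivial cycles are one $\ell$-cycle, one $3$-cycle and $r-s-2$ transpositions. In both cases $I^\ell$ has $2r-1$ non-fixed points, and the quantity $|B_r(I^\ell)\cap B_r(I_n)|$ depends only on this cycle type. Binomial convention: $\binom{p}{q}=0$ if $p<q$, $p<0$ or $q<0$. *)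

theory Defs
  imports Main "HOL-Library.Multiset" "HOL-Combinatorics.Combinatorics"
begin

definition Sym :: "nat \<Rightarrow> (nat \<Rightarrow> nat) set" where
  "Sym n = {\<sigma>. \<sigma> permutes {1..n}}"

definition hamming :: "nat \<Rightarrow> (nat \<Rightarrow> nat) \<Rightarrow> (nat \<Rightarrow> nat) \<Rightarrow> nat" where
  "hamming n \<pi> \<tau> = card {i \<in> {1..n}. \<pi> i \<noteq> \<tau> i}"

definition ball_r :: "nat \<Rightarrow> nat \<Rightarrow> (nat \<Rightarrow> nat) \<Rightarrow> (nat \<Rightarrow> nat) set" where
  "ball_r n r \<pi> = {\<sigma> \<in> Sym n. hamming n \<sigma> \<pi> \<le> r}"

definition cycle_type :: "(nat \<Rightarrow> nat) \<Rightarrow> nat multiset" where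
  "cycle_type \<sigma> = image_mset card (mset_set {orbit \<sigma> x | x. \<sigma> x \<noteq> x})"

definition admissible :: "nat \<Rightarrow> nat \<Rightarrow> bool" where
  "admissible r l \<longleftrightarrow> (\<exists>s. 2 \<le> s \<and> s \<le> r \<and> l = 2*s - 1) \<or> (\<exists>s. 2 \<le> s \<and> s + 2 \<le> r \<and> l = 2*s)"

text \<open>Cycle type (non-trivial cycles) of I^l.\<close>
definition I_type :: "nat \<Rightarrow> nat \<Rightarrow> nat multiset" where
  "I_type r l = (if odd l then {#l#} + replicate_mset (r - (l + 1) div 2) 2
                 else {#l, 3#} + replicate_mset (r - l div 2 - 2) 2)"

end

theory Submission
  imports Defs "HOL.Binomial_Plus"
begin

text \<open>Let \<open>p\<close> be a permutation with \<open>2r - 1\<close> non-fixed points and \<open>\<sigma>\<close> a permutation within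
  distance \<open>r\<close> of both \<open>p\<close> and \<open>I\<^sub>n\<close>. Every point moved by \<open>p\<close> is a point where \<open>\<sigma>\<close> differs from
  \<open>I\<^sub>n\<close> or from \<open>p\<close>, so the two radii leave room for at most one point \<open>x\<close> where \<open>\<sigma>\<close> differs
  from both. If there is none, \<open>\<sigma>\<close> is the product of a family of cycles of \<open>p\<close> of total length
  \<open>r - 1\<close> or \<open>r\<close>. Otherwise \<open>\<sigma>\<close> follows \<open>p\<close> except at \<open>x\<close>, where it jumps back and so cuts one
  cycle of \<open>p\<close> short, and besides that it consists of whole cycles of \<open>p\<close>. Hence
  \<open>|B\<^sub>r(p) \<inter> B\<^sub>r(I\<^sub>n)|\<close> is a sum of counts of subfamilies of cycles with total length in a window.
  For the cycle types \<open>I\<^sup>\<ell>\<close> all but one or two cycles are transpositions, so these counts are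
  sums of binomial coefficients in the number of transpositions; comparing consecutive \<open>\<ell>\<close> by
  Pascal's rule and the unimodality of binomial coefficients puts the maximum at \<open>\<ell> = 5\<close> for
  \<open>r = 2t\<close> and at \<open>\<ell> = 7\<close> for \<open>r = 2t + 1\<close>.\<close>

section \<open>Binomial coefficients with integer lower index\<close>

definition zbinom :: "nat \<Rightarrow> int \<Rightarrow> int" where
  "zbinom q j = (if j < 0 then 0 else int (q choose nat j))"

definition zbinom_sum :: "nat \<Rightarrow> int \<Rightarrow> int \<Rightarrow> int" where
  "zbinom_sum q a b = (\<Sum>j\<in>{a..b}. zbinom q j)"

lemma zbinom_nonneg: "0 \<le> zbinom q j"
  by (simp add: zbinom_def)

lemma zbinom_Suc: "zbinom (Suc q) j = zbinom q j + zbinom q (j - 1)"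
proof (cases "j \<le> 0")
  case True
  then show ?thesis by (cases "j = 0") (auto simp: zbinom_def)
next
  case False
  then have "nat j = Suc (nat (j - 1))" by simp
  then show ?thesis using False by (simp add: zbinom_def)
qed

lemma zbinom_symmetric: "zbinom q j = zbinom q (int q - j)"
proof (cases "j < 0 \<or> j > int q")
  case True
  then show ?thesis by (auto simp: zbinom_def binomial_eq_0)
next
  case False
  then have "0 \<le> j" "j \<le> int q" by auto
  then have "nat (int q - j) = q - nat j" "nat j \<le> q" by simp_all
  then show ?thesis using False binomial_symmetric[of "nat j" q] by (simp add: zbinom_def)
qed

lemma zbinom_symmetric_eq: "a + b = int q \<Longrightarrow> zbinom q a = zbinom q b"
proof -
  assume "a + b = int q"
  then have "b = int q - a" by simp
  then show ?thesis using zbinom_symmetric[of q a] by simp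
qed

lemma zbinom_le_if_closer_to_centre:
  assumes "\<bar>2*j - int q\<bar> \<le> \<bar>2*i - int q\<bar>"
  shows "zbinom q i \<le> zbinom q j"
proof -
  define i' where "i' = (if int q \<le> 2*i then i else int q - i)"
  define j' where "j' = (if int q \<le> 2*j then j else int q - j)"
  have "zbinom q i = zbinom q i'" "zbinom q j = zbinom q j'"
    unfolding i'_def j'_def using zbinom_symmetric by simp_all
  moreover have "zbinom q i' \<le> zbinom q j'"
  proof (cases "i' > int q")
    case True
    then show ?thesis by (simp add: zbinom_def zbinom_nonneg binomial_eq_0)
  next
    case False
    have "int q \<le> 2*j'" "j' \<le> i'"
      using assms unfolding i'_def j'_def by (auto split: if_splits)
    then have "q choose nat i' \<le> q choose nat j'"
      using False by (intro binomial_antimono) auto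
    then show ?thesis using \<open>int q \<le> 2*j'\<close> \<open>j' \<le> i'\<close> by (simp add: zbinom_def)
  qed
  ultimately show ?thesis by simp
qed

lemma zbinom_sum_empty: "b < a \<Longrightarrow> zbinom_sum q a b = 0"
  by (simp add: zbinom_sum_def)

lemma zbinom_sum_singleton: "zbinom_sum q a a = zbinom q a"
  by (simp add: zbinom_sum_def)

lemma zbinom_sum_nonneg: "0 \<le> zbinom_sum q a b"
  unfolding zbinom_sum_def by (rule sum_nonneg) (simp add: zbinom_nonneg)

lemma zbinom_sum_mono: "a \<le> a' \<Longrightarrow> b' \<le> b \<Longrightarrow> zbinom_sum q a' b' \<le> zbinom_sum q a b"
  unfolding zbinom_sum_def by (rule sum_mono2) (auto simp: zbinom_nonneg)

lemma zbinom_sum_last: "a \<le> b \<Longrightarrow> zbinom_sum q a b = zbinom_sum q a (b - 1) + zbinom q b"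
proof -
  assume "a \<le> b"
  then have "{a..b} = insert b {a..b - 1}" by auto
  then show ?thesis by (simp add: zbinom_sum_def add.commute)
qed

lemma zbinom_sum_first: "a \<le> b \<Longrightarrow> zbinom_sum q a b = zbinom q a + zbinom_sum q (a + 1) b"
proof -
  assume "a \<le> b"
  then have "{a..b} = insert a {a + 1..b}" by auto
  then show ?thesis by (simp add: zbinom_sum_def)
qed

lemma zbinom_sum_Suc: "zbinom_sum (Suc q) a b = zbinom_sum q a b + zbinom_sum q (a - 1) (b - 1)"
proof -
  have "(\<Sum>j\<in>{a..b}. zbinom q (j - 1)) = zbinom_sum q (a - 1) (b - 1)"
    unfolding zbinom_sum_def
    by (rule sum.reindex_bij_witness[of _ "\<lambda>j. j + 1" "\<lambda>j. j - 1"]) auto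
  then show ?thesis
    unfolding zbinom_sum_def[of "Suc q"] by (simp add: zbinom_Suc sum.distrib zbinom_sum_def)
qed

lemma zbinom_sum_symmetric: "zbinom_sum q a b = zbinom_sum q (int q - b) (int q - a)"
  unfolding zbinom_sum_def
  by (rule sum.reindex_bij_witness[of _ "\<lambda>j. int q - j" "\<lambda>j. int q - j"])
     (auto simp: zbinom_symmetric[of q "int q - _"])

lemma zbinom_sum_central_pair:
  assumes "2 \<le> t"
  shows "zbinom_sum (2*t - 3) (int t - 2) (int t - 1) = int ((2*t - 2) choose (t - 1))"
proof -
  have "zbinom_sum (2*t - 3) (int t - 2) (int t - 1) = zbinom (Suc (2*t - 3)) (int t - 1)"
    using zbinom_sum_last[of "int t - 2" "int t - 1" "2*t - 3"]
    by (simp add: zbinom_sum_singleton zbinom_Suc)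
  moreover have "Suc (2*t - 3) = 2*t - 2" "nat (int t - 1) = t - 1" using assms by auto
  ultimately show ?thesis using assms by (simp add: zbinom_def)
qed

text \<open>For \<open>r = 2t + e\<close> with \<open>e \<in> {0, 1}\<close>, these are the values of \<open>|B\<^sub>r(I\<^sup>\<ell>) \<inter> B\<^sub>r(I\<^sub>n)|\<close>
  for \<open>\<ell> = 2s - 1\<close> (\<open>meet_odd e t s\<close>) and for \<open>\<ell> = 2s\<close> (\<open>meet_even0 t s\<close>, \<open>meet_even1 t s\<close>),
  simplified by the symmetry of the binomial coefficients.\<close>

definition meet_odd :: "nat \<Rightarrow> nat \<Rightarrow> nat \<Rightarrow> int" where
  "meet_odd e t s = 2 * zbinom (2*t + e - s) (int t)
     + (2*int s - 1) * zbinom_sum (2*t + e - s) (int t - int s + 1 + int e) (int t - 1)"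

definition meet_even0 :: "nat \<Rightarrow> nat \<Rightarrow> int" where
  "meet_even0 t s = 2 * zbinom (2*t - s - 2) (int t) + 2 * zbinom (2*t - s - 2) (int t - 2)
     + 6 * zbinom (2*t - s - 2) (int t - 1)
     + 2 * int s * (zbinom_sum (2*t - s - 2) (int t - int s + 1) (int t - 1)
                    + zbinom_sum (2*t - s - 2) (int t - int s - 1) (int t - 3))"

definition meet_even1 :: "nat \<Rightarrow> nat \<Rightarrow> int" where
  "meet_even1 t s = 2 * zbinom (2*t - s - 1) (int t) + 2 * zbinom (2*t - s - 1) (int t - 1)
     + 2 * int s * (zbinom_sum (2*t - s - 1) (int t - int s + 1) (int t - 1)
                    + zbinom_sum (2*t - s - 1) (int t - int s) (int t - 2))"

lemma meet_odd_step:
  assumes "e \<le> 1" "1 + e \<le> s" "s + 1 \<le> 2*t + e"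
  defines "q \<equiv> 2*t + e - s - 1"
  shows "meet_odd e t (s + 1) + (2*int s - 3) * zbinom_sum q (int t - int s + 1 + int e) (int t - 1)
         = meet_odd e t s + (2*int s - 1) * zbinom q (int t - 1)"
proof -
  define P where "P = zbinom_sum q (int t - int s + 1 + int e) (int t - 1)"
  define c where "c = zbinom q (int t - 1)"
  have q_int: "int q = 2 * int t + int e - int s - 1" using assms by (simp add: q_def)
  have "2*t + e - s = Suc q" "2*t + e - (s + 1) = q" using assms by (simp_all add: q_def)
  moreover
  have "zbinom_sum (Suc q) (int t - int s + 1 + int e) (int t - 1) = 2 * P"
    using zbinom_sum_Suc[of q "int t - int s + 1 + int e" "int t - 1"]
      zbinom_sum_symmetric[of q "int t - int s + int e" "int t - 2"]
    by (simp add: P_def q_int algebra_simps)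
  moreover have "zbinom_sum q (int t - int (s + 1) + 1 + int e) (int t - 1) = c + P"
    using zbinom_sum_first[of "int t - int s + int e" "int t - 1" q] assms
      zbinom_symmetric[of q "int t - int s + int e"]
    by (simp add: P_def c_def q_int algebra_simps)
  ultimately show ?thesis
    unfolding meet_odd_def P_def[symmetric] c_def[symmetric]
    by (simp add: zbinom_Suc c_def algebra_simps)
qed

lemma meet_odd_mono_below_peak:
  assumes "e \<le> 1" "2 \<le> s" "s \<le> 2 + e" "s + 1 \<le> 2*t + e"
  shows "meet_odd e t s \<le> meet_odd e t (s + 1)"
proof -
  define q where "q = 2*t + e - s - 1"
  define P where "P = zbinom_sum q (int t - int s + 1 + int e) (int t - 1)"
  have "P \<le> zbinom_sum q (int t - 1) (int t - 1)"
    unfolding P_def using assms by (intro zbinom_sum_mono) auto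
  then have "P \<le> zbinom q (int t - 1)" by (simp add: zbinom_sum_singleton)
  moreover have "0 \<le> P" by (simp add: P_def zbinom_sum_nonneg)
  moreover have "meet_odd e t (s + 1) + (2*int s - 3) * P = meet_odd e t s + (2*int s - 1) * zbinom q (int t - 1)"
    using meet_odd_step[of e s t] assms unfolding P_def q_def by simp
  moreover have "(2*int s - 3) * P \<le> (2*int s - 1) * zbinom q (int t - 1)"
    using \<open>0 \<le> P\<close> \<open>P \<le> zbinom q (int t - 1)\<close> assms by (intro mult_mono) auto
  ultimately show ?thesis by linarith
qed

lemma meet_odd_antimono_above_peak:
  assumes "e \<le> 1" "3 + e \<le> s" "s + 1 \<le> 2*t + e"
  shows "meet_odd e t (s + 1) \<le> meet_odd e t s"
proof -
  define q where "q = 2*t + e - s - 1"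
  define P where "P = zbinom_sum q (int t - int s + 1 + int e) (int t - 1)"
  define c where "c = zbinom q (int t - 1)"
  \<comment> \<open>the window of \<open>P\<close> contains \<open>t - 2\<close>, whose coefficient is at least \<open>c\<close>\<close>
  have "zbinom_sum q (int t - 2) (int t - 1) \<le> P"
    unfolding P_def using assms by (intro zbinom_sum_mono) auto
  moreover have "zbinom_sum q (int t - 2) (int t - 1) = zbinom q (int t - 2) + c"
    using zbinom_sum_last[of "int t - 2" "int t - 1" q] by (simp add: c_def zbinom_sum_singleton)
  moreover have "c \<le> zbinom q (int t - 2)"
    unfolding c_def using assms by (intro zbinom_le_if_closer_to_centre) (auto simp: q_def)
  ultimately have "2 * c \<le> P" by simp
  moreover have "0 \<le> c" by (simp add: c_def zbinom_nonneg)
  ultimately have "(2*int s - 1) * c \<le> (2*int s - 3) * P"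
  proof -
    assume h: "2 * c \<le> P" "0 \<le> c"
    have "(2*int s - 1) * c \<le> (4*int s - 6) * c" using h assms by (intro mult_right_mono) auto
    also have "\<dots> = (2*int s - 3) * (2 * c)" by (simp add: algebra_simps)
    also have "\<dots> \<le> (2*int s - 3) * P" using h assms by (intro mult_left_mono) auto
    finally show ?thesis .
  qed
  then show ?thesis
    using meet_odd_step[of e s t] assms unfolding P_def c_def q_def by simp
qed

lemma meet_odd_le_peak:
  assumes "e \<le> 1" "2 \<le> t" "2 \<le> s" "s \<le> 2*t + e"
  shows "meet_odd e t s \<le> meet_odd e t (3 + e)"
proof (cases "s \<le> 3 + e")
  case True
  show ?thesis using True assms(3)
  proof (induction s rule: inc_induct)
    case (step k)
    then show ?case using meet_odd_mono_below_peak[of e k t] assms by simp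
  qed simp
next
  case False
  then have "3 + e \<le> s" by simp
  then show ?thesis using assms(4)
  proof (induction s rule: dec_induct)
    case (step k)
    then show ?case using meet_odd_antimono_above_peak[of e k t] assms by simp
  qed simp
qed

lemma meet_odd_peak:
  assumes "2 \<le> t"
  shows "meet_odd e t (3 + e) = int (2 * ((2*t - 3) choose t) + (5 + 2*e) * ((2*t - 2) choose (t - 1)))"
proof -
  have "2*t + e - (3 + e) = 2*t - 3" by simp
  then show ?thesis
    unfolding meet_odd_def using zbinom_sum_central_pair[OF assms] by (simp add: zbinom_def algebra_simps)
qed

lemma meet_even0_le_meet_odd:
  assumes "2 \<le> s" "s + 2 \<le> 2*t"
  shows "meet_even0 t s \<le> meet_odd 0 t (s + 1)"
proof -
  define q where "q = 2*t - s - 2"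
  have q_int: "int q = 2 * int t - int s - 2" using assms by (simp add: q_def)
  define R where "R = zbinom_sum q (int t - int s + 1) (int t - 1) + zbinom_sum q (int t - int s - 1) (int t - 3)"
  define c where "c = zbinom q (int t - 2)"
  have "zbinom_sum (Suc q) (int t - int (s + 1) + 1) (int t - 1)
      = zbinom_sum q (int t - int s) (int t - 1) + zbinom_sum q (int t - int s - 1) (int t - 2)"
    using zbinom_sum_Suc[of q "int t - int s" "int t - 1"] by (simp add: algebra_simps)
  also have "\<dots> = R + 2 * c"
    using zbinom_sum_first[of "int t - int s" "int t - 1" q]
      zbinom_sum_last[of "int t - int s - 1" "int t - 2" q]
      zbinom_symmetric[of q "int t - int s"] assms
    by (simp add: R_def c_def q_int algebra_simps)
  moreover have "2*t + 0 - (s + 1) = Suc q" using assms by (simp add: q_def)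
  ultimately have "meet_odd 0 t (s + 1) = 2 * zbinom q (int t) + 2 * zbinom q (int t - 1) + (2 * int s + 1) * (R + 2 * c)"
    unfolding meet_odd_def by (simp add: zbinom_Suc algebra_simps)
  moreover have "meet_even0 t s = 2 * zbinom q (int t) + 2 * c + 6 * zbinom q (int t - 1) + 2 * int s * R"
    unfolding meet_even0_def q_def R_def c_def by simp
  moreover have "zbinom q (int t - 1) \<le> c"
    unfolding c_def using assms q_int by (intro zbinom_le_if_closer_to_centre) auto
  moreover have "0 \<le> R" "0 \<le> c" unfolding R_def c_def by (simp_all add: zbinom_sum_nonneg zbinom_nonneg)
  moreover have "8 * c \<le> 4 * int s * c" using assms \<open>0 \<le> c\<close> by (intro mult_right_mono) auto
  ultimately show ?thesis by (simp add: algebra_simps)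
qed

lemma meet_even1_le_meet_odd:
  assumes "1 \<le> s" "s + 1 \<le> 2*t"
  shows "meet_even1 t s \<le> meet_odd 1 t (s + 1)"
proof -
  define q where "q = 2*t - s - 1"
  define R where "R = zbinom_sum q (int t - int s + 1) (int t - 1) + zbinom_sum q (int t - int s) (int t - 2)"
  have "zbinom_sum (Suc q) (int t - int (s + 1) + 1 + 1) (int t - 1) = R"
    using zbinom_sum_Suc[of q "int t - int s + 1" "int t - 1"] by (simp add: R_def algebra_simps)
  moreover have "2*t + 1 - (s + 1) = Suc q" using assms by (simp add: q_def)
  ultimately have "meet_odd 1 t (s + 1) = 2 * zbinom q (int t) + 2 * zbinom q (int t - 1) + (2 * int s + 1) * R"
    unfolding meet_odd_def by (simp add: zbinom_Suc algebra_simps)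
  moreover have "meet_even1 t s = 2 * zbinom q (int t) + 2 * zbinom q (int t - 1) + 2 * int s * R"
    unfolding meet_even1_def q_def R_def by simp
  moreover have "0 \<le> R" unfolding R_def by (simp add: zbinom_sum_nonneg)
  ultimately show ?thesis by (simp add: algebra_simps)
qed

section \<open>Cycles of a permutation of \<open>{1..n}\<close>\<close>

definition weight :: "'a set set \<Rightarrow> nat" where
  "weight T = (\<Sum>C\<in>T. card C)"

lemma SymI:
  assumes "\<And>i. i \<notin> {1..n} \<Longrightarrow> \<sigma> i = i" "\<And>i. i \<in> {1..n} \<Longrightarrow> \<sigma> i \<in> {1..n}"
    and "inj_on \<sigma> {1..n}"
  shows "\<sigma> \<in> Sym n"
proof -
  have "\<sigma> ` {1..n} = {1..n}"
    using assms(2) endo_inj_surj[OF finite_atLeastAtMost _ assms(3)] by blast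
  then have "bij_betw \<sigma> {1..n} {1..n}" using assms(3) by (simp add: bij_betw_def)
  then have "\<sigma> permutes {1..n}" using assms(1) by (rule bij_imp_permutes)
  then show ?thesis by (simp add: Sym_def)
qed

lemma Sym_inj: "\<sigma> \<in> Sym n \<Longrightarrow> inj \<sigma>"
  unfolding Sym_def by (auto intro: permutes_inj)

lemma Sym_fixes_outside: "\<sigma> \<in> Sym n \<Longrightarrow> i \<notin> {1..n} \<Longrightarrow> \<sigma> i = i"
  unfolding Sym_def by (auto intro: permutes_not_in)

locale perm_cycles =
  fixes p :: "nat \<Rightarrow> nat" and n :: nat
  assumes p_permutes: "p permutes {1..n}"
begin

abbreviation "U \<equiv> {1..n}"

definition "moved = {x. p x \<noteq> x}"

definition "cycles = {orbit p x | x. p x \<noteq> x}"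

lemma permutation_p: "permutation p"
  using finite_atLeastAtMost p_permutes permutation_permutes by blast

lemma p_eq_iff: "p a = p b \<longleftrightarrow> a = b"
  using permutes_inj[OF p_permutes] by (auto dest: injD)

lemma moved_subset: "moved \<subseteq> U"
  using permutes_not_in[OF p_permutes] unfolding moved_def by blast

lemma finite_moved: "finite moved"
  using moved_subset by (rule finite_subset) simp

lemma p_in_U: "i \<in> U \<Longrightarrow> p i \<in> U"
  using permutes_in_image[OF p_permutes] by simp

lemma in_own_orbit: "x \<in> orbit p x"
  using permutation_p by (rule permutation_self_in_orbit)

lemma orbit_eq: "y \<in> orbit p x \<Longrightarrow> orbit p y = orbit p x"
  using orbit_cyclic_eq3[OF cyclic_on_orbit'[OF permutation_p]] by blast

lemma funpow_in_own_orbit: "(p ^^ j) x \<in> orbit p x"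
  by (rule funpow_in_orbit[OF in_own_orbit])

lemma orbit_subset_moved: "x \<in> moved \<Longrightarrow> orbit p x \<subseteq> moved"
proof
  fix y assume x: "x \<in> moved" and y: "y \<in> orbit p x"
  show "y \<in> moved"
  proof (rule ccontr)
    assume "y \<notin> moved"
    then have "orbit p x = {y}"
      using orbit_eq_singleton_iff[of p y] orbit_eq[OF y] by (simp add: moved_def)
    then show False
      using x orbit_eq_singleton_iff[of p x] in_own_orbit[of x] by (auto simp: moved_def)
  qed
qed

lemma cycles_eq_image: "cycles = (\<lambda>x. orbit p x) ` moved"
  unfolding cycles_def moved_def by auto

lemma finite_cycles: "finite cycles"
  unfolding cycles_eq_image using finite_moved by simp

lemma finite_cycle: "C \<in> cycles \<Longrightarrow> finite C"
  unfolding cycles_eq_image using finite_orbit[OF in_own_orbit] by auto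

lemma cycle_eq_orbit: "C \<in> cycles \<Longrightarrow> i \<in> C \<Longrightarrow> C = orbit p i"
  unfolding cycles_eq_image using orbit_eq by auto

lemma orbit_in_cycles: "x \<in> moved \<Longrightarrow> orbit p x \<in> cycles"
  unfolding cycles_eq_image by auto

lemma cycles_disjoint: "C1 \<in> cycles \<Longrightarrow> C2 \<in> cycles \<Longrightarrow> C1 \<noteq> C2 \<Longrightarrow> C1 \<inter> C2 = {}"
  using cycle_eq_orbit by blast

lemma Union_cycles: "\<Union>cycles = moved"
  unfolding cycles_eq_image using orbit_subset_moved in_own_orbit by auto

lemma Union_subset_moved: "T \<subseteq> cycles \<Longrightarrow> \<Union>T \<subseteq> moved"
  using Union_mono Union_cycles by metis

lemma p_in_Union: "T \<subseteq> cycles \<Longrightarrow> i \<in> \<Union>T \<Longrightarrow> p i \<in> \<Union>T"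
proof -
  assume "T \<subseteq> cycles" "i \<in> \<Union>T"
  then obtain C where C: "C \<in> T" "C \<in> cycles" "i \<in> C" by blast
  then have "p i \<in> C" using cycle_eq_orbit[OF C(2,3)] orbit.step[OF in_own_orbit, of i] by simp
  then show ?thesis using C by blast
qed

lemma weight_eq_card_Union: "T \<subseteq> cycles \<Longrightarrow> weight T = card (\<Union>T)"
proof -
  assume T: "T \<subseteq> cycles"
  then have "pairwise disjnt T" unfolding pairwise_def disjnt_def using cycles_disjoint by blast
  then show ?thesis unfolding weight_def using T finite_cycle by (simp add: card_Union_disjoint subset_iff)
qed

lemma weight_cycles: "weight cycles = card moved"
  using weight_eq_card_Union[of cycles] Union_cycles by simp

lemma family_eq_cycles_within: "T \<subseteq> cycles \<Longrightarrow> T = {C \<in> cycles. C \<subseteq> \<Union>T}"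
proof safe
  fix C assume T: "T \<subseteq> cycles" and C: "C \<in> cycles" "C \<subseteq> \<Union>T"
  obtain z where "z \<in> C" using C(1) in_own_orbit unfolding cycles_eq_image by blast
  then obtain C' where "C' \<in> T" "z \<in> C'" using C by blast
  then show "C \<in> T" using cycles_disjoint[OF C(1), of C'] T \<open>z \<in> C\<close> by blast
qed auto

lemma Union_family_inj: "T1 \<subseteq> cycles \<Longrightarrow> T2 \<subseteq> cycles \<Longrightarrow> \<Union>T1 = \<Union>T2 \<Longrightarrow> T1 = T2"
  using family_eq_cycles_within by metis

lemma Union_cycles_within:
  assumes "A \<subseteq> moved" "\<And>i. i \<in> A \<Longrightarrow> p i \<in> A"
  shows "\<Union>{C \<in> cycles. C \<subseteq> A} = A"
proof
  show "A \<subseteq> \<Union>{C \<in> cycles. C \<subseteq> A}"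
  proof
    fix x assume x: "x \<in> A"
    have "orbit p x \<subseteq> A"
    proof
      fix y assume "y \<in> orbit p x"
      then show "y \<in> A" by (induction rule: orbit.induct) (use x assms in auto)
    qed
    then show "x \<in> \<Union>{C \<in> cycles. C \<subseteq> A}" using orbit_in_cycles[of x] x assms in_own_orbit by blast
  qed
qed auto

definition period :: "nat \<Rightarrow> nat" where
  "period y = card (orbit p y)"

lemma period_eq_funpow_dist1: "period y = funpow_dist1 p y y"
  unfolding period_def
  by (simp add: orbit_conv_funpow_dist1[OF in_own_orbit] card_image inj_on_funpow_dist1[OF in_own_orbit])

lemma period_pos: "0 < period y"
  unfolding period_eq_funpow_dist1 by simp

lemma funpow_period: "(p ^^ period y) y = y"
  unfolding period_eq_funpow_dist1 by (rule funpow_dist1_prop[OF in_own_orbit])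

lemma funpow_inj_below_period: "i < period y \<Longrightarrow> j < period y \<Longrightarrow> (p ^^ i) y = (p ^^ j) y \<Longrightarrow> i = j"
  using inj_on_funpow_dist1[OF in_own_orbit[of y]] unfolding period_eq_funpow_dist1
  by (auto simp: inj_on_def)

lemma orbit_funpow_below_period: "z \<in> orbit p y \<Longrightarrow> \<exists>j<period y. z = (p ^^ j) y"
  using orbit_conv_funpow_dist1[OF in_own_orbit[of y]] unfolding period_eq_funpow_dist1 by auto

definition prod_cycles :: "nat set set \<Rightarrow> nat \<Rightarrow> nat" where
  "prod_cycles T i = (if i \<in> \<Union>T then p i else i)"

lemma moved_prod_cycles: "T \<subseteq> cycles \<Longrightarrow> {i. prod_cycles T i \<noteq> i} = \<Union>T"
  unfolding prod_cycles_def using Union_subset_moved unfolding moved_def by auto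

lemma prod_cycles_Sym:
  assumes T: "T \<subseteq> cycles" shows "prod_cycles T \<in> Sym n"
proof (rule SymI)
  fix i
  show "prod_cycles T i = i" if "i \<notin> U"
  proof -
    have "i \<notin> \<Union>T" using that Union_subset_moved[OF T] moved_subset by blast
    then show ?thesis by (simp add: prod_cycles_def)
  qed
  show "i \<in> U \<Longrightarrow> prod_cycles T i \<in> U"
    using p_in_U by (simp add: prod_cycles_def)
  show "inj_on (prod_cycles T) U"
    using p_in_Union[OF T] p_eq_iff by (auto simp: inj_on_def prod_cycles_def split: if_splits)
qed

lemma hamming_prod_cycles_id: "T \<subseteq> cycles \<Longrightarrow> hamming n (prod_cycles T) id = weight T"
proof -
  assume T: "T \<subseteq> cycles"
  have "{i \<in> U. prod_cycles T i \<noteq> id i} = U \<inter> {i. prod_cycles T i \<noteq> i}" by auto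
  also have "\<dots> = \<Union>T" using moved_prod_cycles[OF T] Union_subset_moved[OF T] moved_subset by blast
  finally show ?thesis by (simp add: hamming_def weight_eq_card_Union[OF T])
qed

lemma hamming_prod_cycles_p: "T \<subseteq> cycles \<Longrightarrow> hamming n (prod_cycles T) p = card moved - weight T"
proof -
  assume T: "T \<subseteq> cycles"
  have "{i \<in> U. prod_cycles T i \<noteq> p i} = moved - \<Union>T"
    using moved_subset by (auto simp: prod_cycles_def moved_def)
  then show ?thesis
    using Union_subset_moved[OF T] finite_moved
    by (simp add: hamming_def weight_eq_card_Union[OF T] card_Diff_subset finite_subset)
qed

lemma eq_prod_cycles:
  assumes \<sigma>_Sym: "\<sigma> \<in> Sym n" and \<sigma>_id_or_p: "\<And>i. \<sigma> i = i \<or> \<sigma> i = p i"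
  shows "\<sigma> = prod_cycles {C \<in> cycles. C \<subseteq> {i. \<sigma> i \<noteq> i}}"
proof -
  define M where "M = {i. \<sigma> i \<noteq> i}"
  have "p i \<in> M" if "i \<in> M" for i
  proof (rule ccontr)
    assume "p i \<notin> M"
    then have "\<sigma> (p i) = \<sigma> i" using that \<sigma>_id_or_p[of i] by (auto simp: M_def)
    then have "p i = i" using Sym_inj[OF \<sigma>_Sym] by (auto dest: injD)
    then show False using that \<sigma>_id_or_p[of i] by (auto simp: M_def)
  qed
  moreover have "M \<subseteq> moved" unfolding M_def moved_def using \<sigma>_id_or_p by force
  ultimately have "\<Union>{C \<in> cycles. C \<subseteq> M} = M" using Union_cycles_within by blast
  then show ?thesis
    unfolding M_def[symmetric] using \<sigma>_id_or_p
    by (intro ext) (metis (mono_tags, lifting) M_def mem_Collect_eq prod_cycles_def)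
qed

definition arc :: "nat \<Rightarrow> nat \<Rightarrow> nat set" where
  "arc y k = (\<lambda>j. (p ^^ j) y) ` {..<k}"

text \<open>\<open>shortcut y k T\<close> is the product of the cycles in \<open>T\<close> with the \<open>(k + 1)\<close>-cycle
  \<open>(y p(y) \<dots> p\<^sup>k(y))\<close>: it follows the cycle of \<open>y\<close> and jumps from \<open>p\<^sup>k(y)\<close> straight back to \<open>y\<close>.\<close>

definition shortcut :: "nat \<Rightarrow> nat \<Rightarrow> nat set set \<Rightarrow> nat \<Rightarrow> nat" where
  "shortcut y k T i = (if i = (p ^^ k) y then y else if i \<in> \<Union>T \<union> arc y k then p i else i)"

end

locale shortcut_data = perm_cycles +
  fixes y k :: nat and T :: "nat set set"
  assumes y_moved: "y \<in> moved" and T: "T \<subseteq> cycles - {orbit p y}"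
    and k_ge_1: "1 \<le> k" and k_add_2_le_period: "k + 2 \<le> period y"
begin

abbreviation "x \<equiv> (p ^^ k) y"
abbreviation "P \<equiv> \<Union>T \<union> arc y k"

lemma T_cycles: "T \<subseteq> cycles"
  using T by blast

lemma arc_subset_orbit: "arc y k \<subseteq> orbit p y"
  unfolding arc_def using funpow_in_own_orbit by auto

lemma Union_disjoint_orbit: "\<Union>T \<inter> orbit p y = {}"
  using cycles_disjoint T orbit_in_cycles[OF y_moved] by blast

lemma Union_disjoint_arc: "\<Union>T \<inter> arc y k = {}"
  using Union_disjoint_orbit arc_subset_orbit by blast

lemma x_notin_Union: "x \<notin> \<Union>T"
  using Union_disjoint_orbit funpow_in_own_orbit by blast

lemma y_notin_Union: "y \<notin> \<Union>T"
  using Union_disjoint_orbit in_own_orbit by blast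

lemma funpow_y_eq_iff: "i \<le> k + 1 \<Longrightarrow> j \<le> k + 1 \<Longrightarrow> (p ^^ i) y = (p ^^ j) y \<longleftrightarrow> i = j"
  using funpow_inj_below_period[of i y j] k_add_2_le_period by auto

lemma x_notin_arc: "x \<notin> arc y k"
  using funpow_y_eq_iff by (auto simp: arc_def)

lemma y_in_arc: "y \<in> arc y k"
  unfolding arc_def using k_ge_1 by (auto intro!: image_eqI[of _ _ 0])

lemma x_neq_y: "x \<noteq> y"
  using funpow_y_eq_iff[of k 0] k_ge_1 by simp

lemma p_x_neq_y: "p x \<noteq> y"
  using funpow_y_eq_iff[of "Suc k" 0] by simp

lemma card_P: "card P = weight T + k"
proof -
  have "inj_on (\<lambda>j. (p ^^ j) y) {..<k}" using funpow_y_eq_iff by (auto simp: inj_on_def)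
  then have "card (arc y k) = k" unfolding arc_def by (simp add: card_image)
  moreover have "finite (\<Union>T)" using Union_subset_moved[OF T_cycles] finite_moved finite_subset by blast
  moreover have "finite (arc y k)" unfolding arc_def by simp
  ultimately show ?thesis
    using card_Un_disjoint[OF _ _ Union_disjoint_arc] weight_eq_card_Union[OF T_cycles] by simp
qed

lemma P_subset_moved: "P \<subseteq> moved"
  using Union_subset_moved[OF T_cycles] arc_subset_orbit orbit_subset_moved[OF y_moved] by blast

lemma p_in_P: "i \<in> P \<Longrightarrow> p i \<in> P \<union> {x} \<and> p i \<noteq> y"
proof -
  assume i: "i \<in> P"
  show ?thesis
  proof (cases "i \<in> \<Union>T")
    case True
    then show ?thesis using p_in_Union[OF T_cycles] y_notin_Union by blast
  next
    case False
    then obtain j where j: "j < k" "i = (p ^^ j) y" using i unfolding arc_def by auto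
    then have "p i = (p ^^ Suc j) y" by simp
    moreover have "(p ^^ Suc j) y \<noteq> y" using funpow_y_eq_iff[of "Suc j" 0] j by simp
    moreover have "(p ^^ Suc j) y \<in> arc y k \<union> {x}"
    proof (cases "Suc j = k")
      case False
      then show ?thesis using j unfolding arc_def by (intro UnI1 imageI) simp
    qed simp
    ultimately have "p i \<in> arc y k \<union> {x}" "p i \<noteq> y" by simp_all
    then show ?thesis by blast
  qed
qed

lemma insert_x_P_subset_moved: "insert x P \<subseteq> moved"
  using P_subset_moved orbit_subset_moved[OF y_moved] funpow_in_own_orbit by blast

lemma shortcut_x: "shortcut y k T x = y"
  by (simp add: shortcut_def)

lemma shortcut_P: "i \<in> P \<Longrightarrow> shortcut y k T i = p i"
  using x_notin_arc x_notin_Union by (auto simp: shortcut_def)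

lemma shortcut_outside: "i \<notin> P \<Longrightarrow> i \<noteq> x \<Longrightarrow> shortcut y k T i = i"
  by (simp add: shortcut_def)

lemma shortcut_Sym: "shortcut y k T \<in> Sym n"
proof (rule SymI)
  fix i
  show "shortcut y k T i = i" if "i \<notin> U"
  proof -
    have "i \<notin> insert x P" using that insert_x_P_subset_moved moved_subset by blast
    then show ?thesis by (intro shortcut_outside) auto
  qed
  show "shortcut y k T i \<in> U" if "i \<in> U"
  proof -
    have "y \<in> U" using y_moved moved_subset by blast
    then show ?thesis unfolding shortcut_def using p_in_U[OF that] that by simp
  qed
next
  let ?g = "\<lambda>z. if z = y then x else if z \<in> p ` P then inv p z else z"
  have "?g (shortcut y k T i) = i" for i
  proof (cases "i \<in> P")
    case True
    then have "shortcut y k T i = p i" "p i \<noteq> y" "p i \<in> p ` P" using shortcut_P p_in_P by auto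
    then show ?thesis using inv_f_f[OF permutes_inj[OF p_permutes]] by simp
  next
    case False
    show ?thesis
    proof (cases "i = x")
      case True
      then show ?thesis using shortcut_x by simp
    next
      case i_neq_x: False
      have "i \<notin> p ` P" using False i_neq_x p_in_P by blast
      moreover have "i \<noteq> y" using False y_in_arc by blast
      ultimately show ?thesis using shortcut_outside[OF False i_neq_x] by simp
    qed
  qed
  then show "inj_on (shortcut y k T) U" by (rule inj_on_inverseI)
qed

lemma moved_shortcut: "{i. shortcut y k T i \<noteq> i} = insert x P"
proof -
  have "p i \<noteq> i" if "i \<in> P" for i using that P_subset_moved by (auto simp: moved_def)
  then show ?thesis using shortcut_P shortcut_outside shortcut_x x_neq_y by fastforce
qed

lemma shortcut_defect: "{i. shortcut y k T i \<noteq> i \<and> shortcut y k T i \<noteq> p i} = {x}"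
proof -
  have "shortcut y k T i \<noteq> i \<and> shortcut y k T i \<noteq> p i \<longleftrightarrow> i = x" for i
  proof (cases "i = x")
    case True
    then show ?thesis using shortcut_x x_neq_y p_x_neq_y by auto
  next
    case False
    then show ?thesis using shortcut_P shortcut_outside by (cases "i \<in> P") auto
  qed
  then show ?thesis by blast
qed

lemma finite_P: "finite P"
  using P_subset_moved finite_moved finite_subset by blast

lemma hamming_shortcut_id: "hamming n (shortcut y k T) id = weight T + k + 1"
proof -
  have "{i \<in> U. shortcut y k T i \<noteq> id i} = U \<inter> {i. shortcut y k T i \<noteq> i}" by auto
  also have "\<dots> = insert x P" using moved_shortcut insert_x_P_subset_moved moved_subset by blast
  finally show ?thesis using card_P finite_P x_notin_arc x_notin_Union by (simp add: hamming_def)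
qed

lemma hamming_shortcut_p: "hamming n (shortcut y k T) p = card moved - (weight T + k)"
proof -
  have "shortcut y k T i \<noteq> p i \<longleftrightarrow> i \<in> moved - P" if "i \<in> U" for i
  proof (cases "i = x")
    case True
    then show ?thesis using shortcut_x p_x_neq_y insert_x_P_subset_moved x_notin_arc x_notin_Union by auto
  next
    case False
    then show ?thesis using shortcut_P shortcut_outside[OF _ False] by (cases "i \<in> P") (auto simp: moved_def)
  qed
  then have "{i \<in> U. shortcut y k T i \<noteq> p i} = moved - P" using moved_subset by blast
  then show ?thesis unfolding hamming_def using P_subset_moved card_P finite_P by (simp add: card_Diff_subset)
qed

end

section \<open>The intersection of the balls around \<open>p\<close> and \<open>I\<^sub>n\<close>\<close>

locale single_defect = perm_cycles +
  fixes \<sigma> :: "nat \<Rightarrow> nat" and x :: nat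
  assumes \<sigma>_Sym: "\<sigma> \<in> Sym n"
    and \<sigma>_moves_within: "{i. \<sigma> i \<noteq> i} \<subseteq> moved"
    and \<sigma>_agrees_off_x: "\<And>i. \<sigma> i \<noteq> i \<Longrightarrow> i \<noteq> x \<Longrightarrow> \<sigma> i = p i"
    and \<sigma>_x_neq_x: "\<sigma> x \<noteq> x" and \<sigma>_x_neq_p_x: "\<sigma> x \<noteq> p x"
begin

definition "A = {i. \<sigma> i \<noteq> i} - {x}"
abbreviation "y \<equiv> \<sigma> x"

lemma \<sigma>_eq_iff: "\<sigma> a = \<sigma> b \<longleftrightarrow> a = b"
  using Sym_inj[OF \<sigma>_Sym] by (auto dest: injD)

lemma \<sigma>_eq_p_on_A: "i \<in> A \<Longrightarrow> \<sigma> i = p i"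
  using \<sigma>_agrees_off_x by (simp add: A_def)

lemma A_subset_moved: "A \<subseteq> moved"
  using \<sigma>_moves_within by (auto simp: A_def)

lemma y_neq_x: "y \<noteq> x"
  using \<sigma>_x_neq_x by simp

lemma y_in_A: "y \<in> A"
  using \<sigma>_eq_iff[of y x] y_neq_x by (simp add: A_def)

lemma p_A_moved:
  assumes "i \<in> A" shows "\<sigma> (p i) \<noteq> p i"
proof
  assume "\<sigma> (p i) = p i"
  then have "\<sigma> i = i" using \<sigma>_eq_p_on_A[OF assms] \<sigma>_eq_iff by metis
  then show False using assms by (simp add: A_def)
qed

lemma p_A_neq_y:
  assumes "i \<in> A" shows "p i \<noteq> y"
  using \<sigma>_eq_p_on_A[OF assms] \<sigma>_eq_iff[of i x] assms by (auto simp: A_def)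

lemma path_in_A: "(\<forall>i\<le>j. (p ^^ i) y \<noteq> x) \<Longrightarrow> (p ^^ j) y \<in> A"
proof (induction j)
  case 0
  then show ?case using y_in_A by simp
next
  case (Suc j)
  then have "(p ^^ j) y \<in> A" by simp
  then have "\<sigma> ((p ^^ Suc j) y) \<noteq> (p ^^ Suc j) y" using p_A_moved by simp
  moreover have "(p ^^ Suc j) y \<noteq> x" using Suc.prems by blast
  ultimately show ?case by (simp add: A_def)
qed

text \<open>The path \<open>y, p y, \<dots>\<close> stays in \<open>A\<close> until it meets \<open>x\<close>; it must meet \<open>x\<close> before
  closing up, because no point of \<open>A\<close> is mapped to \<open>y\<close> by \<open>p\<close>.\<close>

lemma path_reaches_x: "\<exists>j < period y. (p ^^ j) y = x"
proof (rule ccontr)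
  assume "\<not> ?thesis"
  then have "(p ^^ (period y - 1)) y \<in> A"
    using path_in_A[of "period y - 1"] period_pos[of y] by auto
  moreover have "p ((p ^^ (period y - 1)) y) = y"
    using funpow_period[of y] period_pos[of y] by (metis Suc_pred' comp_apply funpow.simps(2))
  ultimately show False using p_A_neq_y by blast
qed

definition "k = (LEAST j. (p ^^ j) y = x)"

lemma funpow_k: "(p ^^ k) y = x"
  unfolding k_def using path_reaches_x by (auto intro: LeastI)

lemma k_less_period: "k < period y"
  using path_reaches_x Least_le[of "\<lambda>j. (p ^^ j) y = x"] unfolding k_def by (meson le_less_trans)

lemma k_ge_1: "1 \<le> k"
  using funpow_k y_neq_x by (cases k) auto

lemma k_add_2_le_period: "k + 2 \<le> period y"
proof (rule ccontr)
  assume "\<not> ?thesis"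
  then have "Suc k = period y" using k_less_period by simp
  then have "p x = (p ^^ period y) y" using funpow_k by (metis comp_apply funpow.simps(2))
  then have "p x = y" using funpow_period[of y] by simp
  then show False using \<sigma>_x_neq_p_x by simp
qed

lemma arc_subset_A: "arc y k \<subseteq> A"
proof
  fix z assume "z \<in> arc y k"
  then obtain j where "j < k" "z = (p ^^ j) y" unfolding arc_def by auto
  moreover have "\<forall>i\<le>j. (p ^^ i) y \<noteq> x"
    using \<open>j < k\<close> not_less_Least[of _ "\<lambda>j. (p ^^ j) y = x"] unfolding k_def by auto
  ultimately show "z \<in> A" using path_in_A by simp
qed

definition "R = A - arc y k"

lemma p_in_R: "i \<in> R \<Longrightarrow> p i \<in> R"
proof -
  assume i: "i \<in> R"
  then have iA: "i \<in> A" and i_arc: "i \<notin> arc y k" unfolding R_def by blast+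
  have pred_in_arc: False if "p i = (p ^^ Suc j) y" "j < k" for j
  proof -
    have "i = (p ^^ j) y" using that(1) p_eq_iff by simp
    then have "i \<in> arc y k" using that(2) unfolding arc_def by blast
    then show False using i_arc by simp
  qed
  have "(p ^^ Suc (k - 1)) y = x" "k - 1 < k" using funpow_k k_ge_1 by simp_all
  then have "p i \<noteq> x" using pred_in_arc by metis
  then have "p i \<in> A" using p_A_moved[OF iA] by (simp add: A_def)
  moreover have "p i \<notin> arc y k"
  proof
    assume "p i \<in> arc y k"
    then obtain j where j: "j < k" "p i = (p ^^ j) y" unfolding arc_def by auto
    show False
    proof (cases j)
      case 0
      then show False using j p_A_neq_y[OF iA] by simp
    next
      case (Suc j')
      then show False using j pred_in_arc[of j'] by simp
    qed
  qed
  ultimately show ?thesis by (simp add: R_def)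
qed

lemma R_disjoint_orbit: "R \<inter> orbit p y = {}"
proof (rule ccontr)
  assume "R \<inter> orbit p y \<noteq> {}"
  then obtain z where z: "z \<in> R" "z \<in> orbit p y" by blast
  have "x \<in> orbit p y" using funpow_in_own_orbit[of k y] funpow_k by simp
  then have "x \<in> orbit p z" using orbit_eq[OF z(2)] by simp
  then obtain j where "x = (p ^^ j) z" using orbit_funpow_below_period by blast
  moreover have "(p ^^ m) z \<in> R" for m using z(1) by (induction m) (simp_all add: p_in_R)
  moreover have "x \<notin> R" by (simp add: R_def A_def)
  ultimately show False by metis
qed

definition "T = {C \<in> cycles. C \<subseteq> R}"

lemma Union_T: "\<Union>T = R"
proof -
  have "R \<subseteq> moved" using A_subset_moved by (auto simp: R_def)
  then show ?thesis unfolding T_def using p_in_R by (rule Union_cycles_within)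
qed

lemma T_subset: "T \<subseteq> cycles - {orbit p y}"
  using R_disjoint_orbit in_own_orbit by (auto simp: T_def)

lemma shortcut_data: "shortcut_data p n y k T"
  unfolding shortcut_data_def shortcut_data_axioms_def
  using perm_cycles_axioms A_subset_moved y_in_A T_subset k_ge_1 k_add_2_le_period by blast

lemma \<sigma>_eq_shortcut: "\<sigma> = shortcut y k T"
proof
  fix i
  consider "i = x" | "i \<in> A" | "i \<notin> A" "i \<noteq> x" by blast
  then show "\<sigma> i = shortcut y k T i"
  proof cases
    case 1
    then show ?thesis using funpow_k by (simp add: shortcut_def)
  next
    case 2
    then have "i \<in> \<Union>T \<union> arc y k" "i \<noteq> x" using Union_T by (auto simp: R_def A_def)
    then show ?thesis using \<sigma>_eq_p_on_A[OF 2] funpow_k by (simp add: shortcut_def)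
  next
    case 3
    then have "i \<notin> \<Union>T \<union> arc y k" "\<sigma> i = i" using Union_T arc_subset_A by (auto simp: R_def A_def)
    then show ?thesis using 3 funpow_k by (simp add: shortcut_def)
  qed
qed

end

definition subfams_between :: "'a set set \<Rightarrow> int \<Rightarrow> int \<Rightarrow> 'a set set set" where
  "subfams_between F lo hi = {T. T \<subseteq> F \<and> lo \<le> int (weight T) \<and> int (weight T) \<le> hi}"

lemma finite_subfams_between: "finite F \<Longrightarrow> finite (subfams_between F lo hi)"
  unfolding subfams_between_def by simp

locale ball_meet = perm_cycles +
  fixes r :: nat
  assumes card_moved: "card moved + 1 = 2 * r"
begin

definition "meet = ball_r n r p \<inter> ball_r n r id"
definition "meet_compat = {\<sigma> \<in> meet. \<forall>i. \<sigma> i = i \<or> \<sigma> i = p i}"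
definition "meet_shortcuts = meet - meet_compat"

lemma mem_meet_iff: "\<sigma> \<in> meet \<longleftrightarrow> \<sigma> \<in> Sym n \<and> hamming n \<sigma> p \<le> r \<and> hamming n \<sigma> id \<le> r"
  unfolding meet_def ball_r_def by blast

lemma finite_meet: "finite meet"
proof -
  have "meet \<subseteq> Sym n" using mem_meet_iff by blast
  moreover have "finite (Sym n)" unfolding Sym_def by (rule finite_permutations) simp
  ultimately show ?thesis by (rule finite_subset)
qed

lemma bij_betw_prod_cycles_meet_compat:
  "bij_betw prod_cycles (subfams_between cycles (int r - 1) (int r)) meet_compat"
proof (rule bij_betwI')
  fix T1 T2 assume "T1 \<in> subfams_between cycles (int r - 1) (int r)" "T2 \<in> subfams_between cycles (int r - 1) (int r)"
  then have T: "T1 \<subseteq> cycles" "T2 \<subseteq> cycles" by (auto simp: subfams_between_def)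
  show "(prod_cycles T1 = prod_cycles T2) = (T1 = T2)"
  proof
    assume "prod_cycles T1 = prod_cycles T2"
    then have "\<Union>T1 = \<Union>T2" using moved_prod_cycles[OF T(1)] moved_prod_cycles[OF T(2)] by simp
    then show "T1 = T2" using Union_family_inj T by blast
  qed simp
next
  fix T assume T: "T \<in> subfams_between cycles (int r - 1) (int r)"
  then have T_cycles: "T \<subseteq> cycles" by (simp add: subfams_between_def)
  have "prod_cycles T \<in> meet"
    unfolding mem_meet_iff using prod_cycles_Sym[OF T_cycles] hamming_prod_cycles_id[OF T_cycles]
      hamming_prod_cycles_p[OF T_cycles] T card_moved
    by (auto simp: subfams_between_def)
  then show "prod_cycles T \<in> meet_compat" unfolding meet_compat_def prod_cycles_def by auto
next
  fix \<sigma> assume "\<sigma> \<in> meet_compat"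
  then have \<sigma>_meet: "\<sigma> \<in> meet" and \<sigma>_id_or_p: "\<And>i. \<sigma> i = i \<or> \<sigma> i = p i"
    by (auto simp: meet_compat_def)
  define T where "T = {C \<in> cycles. C \<subseteq> {i. \<sigma> i \<noteq> i}}"
  have T_cycles: "T \<subseteq> cycles" by (simp add: T_def)
  have \<sigma>_eq: "\<sigma> = prod_cycles T"
    unfolding T_def using \<sigma>_meet mem_meet_iff \<sigma>_id_or_p by (blast intro: eq_prod_cycles)
  have "hamming n \<sigma> id \<le> r" "hamming n \<sigma> p \<le> r" using \<sigma>_meet mem_meet_iff by auto
  then have "T \<in> subfams_between cycles (int r - 1) (int r)"
    unfolding \<sigma>_eq hamming_prod_cycles_id[OF T_cycles] hamming_prod_cycles_p[OF T_cycles]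
    using card_moved T_cycles by (auto simp: subfams_between_def)
  then show "\<exists>T\<in>subfams_between cycles (int r - 1) (int r). \<sigma> = prod_cycles T" using \<sigma>_eq by blast
qed

text \<open>Outside \<open>meet_compat\<close> there is exactly one point where \<open>\<sigma>\<close> agrees with neither \<open>I\<^sub>n\<close>
  nor \<open>p\<close>: points moved by \<open>p\<close> count against one of the two radii, the defect against both,
  and the radii add up to only \<open>|moved| + 1\<close>.\<close>

lemma meet_single_defect:
  assumes \<sigma>_meet: "\<sigma> \<in> meet" and x: "\<sigma> x \<noteq> x" "\<sigma> x \<noteq> p x"
  shows "single_defect p n \<sigma> x" and "hamming n \<sigma> id = r"
proof -
  have \<sigma>_Sym: "\<sigma> \<in> Sym n" using \<sigma>_meet mem_meet_iff by blast
  define D where "D = {i \<in> U. \<sigma> i \<noteq> i}"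
  define E where "E = {i \<in> U. \<sigma> i \<noteq> p i}"
  have card_D: "card D \<le> r" and card_E: "card E \<le> r"
    using \<sigma>_meet unfolding mem_meet_iff hamming_def D_def E_def by simp_all
  have fin: "finite D" "finite E" unfolding D_def E_def by simp_all
  have x_DE: "x \<in> D \<inter> E" using x Sym_fixes_outside[OF \<sigma>_Sym, of x] by (auto simp: D_def E_def)
  have "D \<union> E = moved \<union> (D - moved)"
    using moved_subset unfolding D_def E_def moved_def by auto
  then have "card (D \<union> E) = card moved + card (D - moved)"
    using finite_moved fin by (metis Diff_disjoint card_Un_disjoint finite_Diff)
  moreover have "card D + card E = card (D \<union> E) + card (D \<inter> E)"
    using card_Un_Int[OF fin] .
  moreover have "1 \<le> card (D \<inter> E)" using x_DE fin by (auto simp: Suc_le_eq card_gt_0_iff)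
  ultimately have "card (D - moved) = 0" "card (D \<inter> E) = 1" "card D = r"
    using card_D card_E card_moved by linarith+
  then have "D - moved = {}" using fin by (simp add: card_eq_0_iff)
  then have D_moved: "D \<subseteq> moved" by blast
  from \<open>card (D \<inter> E) = 1\<close> obtain a where "D \<inter> E = {a}" by (rule card_1_singletonE)
  then have DE: "D \<inter> E = {x}" using x_DE by simp
  have moved_\<sigma>: "{i. \<sigma> i \<noteq> i} = D"
    using Sym_fixes_outside[OF \<sigma>_Sym] by (auto simp: D_def)
  have "\<sigma> i = p i" if "\<sigma> i \<noteq> i" "i \<noteq> x" for i
  proof -
    have "i \<in> D" using that(1) moved_\<sigma> by blast
    then have "i \<notin> E" using that(2) DE by blast
    then show ?thesis using \<open>i \<in> D\<close> by (simp add: D_def E_def)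
  qed
  then show "single_defect p n \<sigma> x"
    unfolding single_defect_def single_defect_axioms_def
    using perm_cycles_axioms \<sigma>_Sym D_moved moved_\<sigma> x by blast
  show "hamming n \<sigma> id = r" using \<open>card D = r\<close> by (simp add: hamming_def D_def)
qed

definition "shortcut_params =
  Sigma moved (\<lambda>y. subfams_between (cycles - {orbit p y}) (int r + 1 - int (period y)) (int r - 2))"

definition "shortcut_of = (\<lambda>(y, T). shortcut y (r - 1 - weight T) T)"

lemma shortcut_params_data:
  assumes "(y, T) \<in> shortcut_params"
  shows "shortcut_data p n y (r - 1 - weight T) T" and "weight T + (r - 1 - weight T) + 1 = r"
proof -
  have "y \<in> moved" "T \<subseteq> cycles - {orbit p y}" "r + 1 \<le> weight T + period y" "weight T + 2 \<le> r"
    using assms by (auto simp: shortcut_params_def subfams_between_def)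
  then show "shortcut_data p n y (r - 1 - weight T) T" and "weight T + (r - 1 - weight T) + 1 = r"
    unfolding shortcut_data_def shortcut_data_axioms_def using perm_cycles_axioms by auto
qed

lemma shortcut_of_in_meet_shortcuts:
  assumes yT: "(y, T) \<in> shortcut_params"
  shows "shortcut_of (y, T) \<in> meet_shortcuts"
proof -
  define k where "k = r - 1 - weight T"
  interpret shortcut_data p n y k T using shortcut_params_data(1)[OF yT] unfolding k_def .
  have "weight T + k + 1 = r" using shortcut_params_data(2)[OF yT] unfolding k_def .
  then have "shortcut y k T \<in> meet"
    unfolding mem_meet_iff using shortcut_Sym hamming_shortcut_id hamming_shortcut_p card_moved by auto
  moreover have "shortcut y k T \<notin> meet_compat"
  proof
    assume "shortcut y k T \<in> meet_compat"
    then have "shortcut y k T x = x \<or> shortcut y k T x = p x" unfolding meet_compat_def by blast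
    then show False using shortcut_x x_neq_y p_x_neq_y by simp
  qed
  ultimately show ?thesis unfolding shortcut_of_def meet_shortcuts_def k_def by simp
qed

lemma inj_on_shortcut_of: "inj_on shortcut_of shortcut_params"
proof (rule inj_onI, clarify)
  fix y1 T1 y2 T2
  assume a: "(y1, T1) \<in> shortcut_params" and b: "(y2, T2) \<in> shortcut_params"
    and e: "shortcut_of (y1, T1) = shortcut_of (y2, T2)"
  define k1 where "k1 = r - 1 - weight T1"
  define k2 where "k2 = r - 1 - weight T2"
  interpret V1: shortcut_data p n y1 k1 T1 using shortcut_params_data(1)[OF a] unfolding k1_def .
  interpret V2: shortcut_data p n y2 k2 T2 using shortcut_params_data(1)[OF b] unfolding k2_def .
  have e': "shortcut y1 k1 T1 = shortcut y2 k2 T2" using e unfolding shortcut_of_def k1_def k2_def by simp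
  \<comment> \<open>the defect point, its image and hence the arc are read off from the permutation\<close>
  have xx: "(p ^^ k1) y1 = (p ^^ k2) y2" using V1.shortcut_defect V2.shortcut_defect e' by simp
  have yy: "y1 = y2" using V1.shortcut_x V2.shortcut_x e' xx by metis
  have kk: "k1 = k2" using funpow_inj_below_period[of k1 y1 k2] xx yy V1.k_add_2_le_period V2.k_add_2_le_period by simp
  have "insert ((p ^^ k1) y1) (\<Union>T1 \<union> arc y1 k1) = insert ((p ^^ k1) y1) (\<Union>T2 \<union> arc y1 k1)"
    using V1.moved_shortcut V2.moved_shortcut e' xx yy kk by simp
  moreover have "(p ^^ k1) y1 \<notin> \<Union>T1 \<union> arc y1 k1" using V1.x_notin_arc V1.x_notin_Union by blast
  moreover have "(p ^^ k1) y1 \<notin> \<Union>T2 \<union> arc y1 k1" using V1.x_notin_arc V2.x_notin_Union xx by auto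
  ultimately have "\<Union>T1 \<union> arc y1 k1 = \<Union>T2 \<union> arc y1 k1" using insert_ident by metis
  then have "\<Union>T1 = \<Union>T2" using V1.Union_disjoint_arc V2.Union_disjoint_arc yy kk by blast
  then show "y1 = y2 \<and> T1 = T2" using Union_family_inj V1.T_cycles V2.T_cycles yy by blast
qed

lemma bij_betw_shortcut_of: "bij_betw shortcut_of shortcut_params meet_shortcuts"
proof (rule bij_betw_imageI[OF inj_on_shortcut_of])
  show "shortcut_of ` shortcut_params = meet_shortcuts"
  proof
    show "shortcut_of ` shortcut_params \<subseteq> meet_shortcuts"
      using shortcut_of_in_meet_shortcuts by auto
  next
    show "meet_shortcuts \<subseteq> shortcut_of ` shortcut_params"
    proof
      fix \<sigma> assume "\<sigma> \<in> meet_shortcuts"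
      then have \<sigma>_meet: "\<sigma> \<in> meet" and "\<sigma> \<notin> meet_compat" by (auto simp: meet_shortcuts_def)
      then obtain x where x: "\<sigma> x \<noteq> x" "\<sigma> x \<noteq> p x" unfolding meet_compat_def by blast
      interpret single_defect p n \<sigma> x using meet_single_defect(1)[OF \<sigma>_meet x] .
      interpret S: shortcut_data p n y k T by (rule shortcut_data)
      have "weight T + k + 1 = r"
        using meet_single_defect(2)[OF \<sigma>_meet x] S.hamming_shortcut_id \<sigma>_eq_shortcut by simp
      then have "(y, T) \<in> shortcut_params" "\<sigma> = shortcut_of (y, T)"
        using S.y_moved S.T k_ge_1 k_add_2_le_period \<sigma>_eq_shortcut
        by (auto simp: shortcut_params_def subfams_between_def shortcut_of_def)
      then show "\<sigma> \<in> shortcut_of ` shortcut_params" by blast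
    qed
  qed
qed

lemma card_shortcut_params:
  "card shortcut_params
    = (\<Sum>C\<in>cycles. card C * card (subfams_between (cycles - {C}) (int r + 1 - int (card C)) (int r - 2)))"
proof -
  let ?F = "\<lambda>y. subfams_between (cycles - {orbit p y}) (int r + 1 - int (period y)) (int r - 2)"
  have "card shortcut_params = (\<Sum>y\<in>moved. card (?F y))"
    unfolding shortcut_params_def using finite_moved finite_cycles by (simp add: finite_subfams_between)
  also have "\<dots> = (\<Sum>C\<in>cycles. \<Sum>y\<in>C. card (?F y))"
  proof -
    have "\<forall>C\<in>cycles. finite C" "\<forall>C\<in>cycles. \<forall>C'\<in>cycles. C \<noteq> C' \<longrightarrow> C \<inter> C' = {}"
      using finite_cycle cycles_disjoint by blast+
    then show ?thesis using sum.Union_disjoint[of cycles "\<lambda>y. card (?F y)"] Union_cycles by simp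
  qed
  also have "\<dots> = (\<Sum>C\<in>cycles. card C * card (subfams_between (cycles - {C}) (int r + 1 - int (card C)) (int r - 2)))"
    using cycle_eq_orbit by (intro sum.cong) (auto simp: period_def)
  finally show ?thesis .
qed

theorem card_meet:
  "card meet = card (subfams_between cycles (int r - 1) (int r))
     + (\<Sum>C\<in>cycles. card C * card (subfams_between (cycles - {C}) (int r + 1 - int (card C)) (int r - 2)))"
proof -
  have "meet_compat \<subseteq> meet" by (auto simp: meet_compat_def)
  then have "card meet = card meet_compat + card meet_shortcuts"
    using finite_meet card_Diff_subset[of meet_compat meet] card_mono[of meet meet_compat]
    unfolding meet_shortcuts_def by (simp add: finite_subset)
  then show ?thesis
    using bij_betw_same_card[OF bij_betw_prod_cycles_meet_compat]
      bij_betw_same_card[OF bij_betw_shortcut_of] card_shortcut_params by simp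
qed

end

lemma subfams_between_empty: "hi < lo \<Longrightarrow> subfams_between F lo hi = {}"
  unfolding subfams_between_def by auto

lemma card_subfams_between_insert:
  assumes F: "finite F" and L: "L \<notin> F"
  shows "card (subfams_between (insert L F) lo hi)
    = card (subfams_between F lo hi) + card (subfams_between F (lo - int (card L)) (hi - int (card L)))"
proof -
  define A where "A = subfams_between F lo hi"
  define B where "B = subfams_between F (lo - int (card L)) (hi - int (card L))"
  have weight_insert: "weight (insert L T) = weight T + card L" if "T \<subseteq> F" for T
  proof -
    have "L \<notin> T" "finite T" using that L finite_subset[OF that F] by auto
    then show ?thesis by (simp add: weight_def)
  qed
  have "subfams_between (insert L F) lo hi = A \<union> insert L ` B"
  proof (intro set_eqI iffI)
    fix T assume T: "T \<in> subfams_between (insert L F) lo hi"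
    show "T \<in> A \<union> insert L ` B"
    proof (cases "L \<in> T")
      case False
      then show ?thesis using T by (auto simp: A_def subfams_between_def)
    next
      case True
      then have "T = insert L (T - {L})" "T - {L} \<subseteq> F" using T by (auto simp: subfams_between_def)
      then have "T - {L} \<in> B" using T weight_insert[of "T - {L}"]
        by (auto simp: B_def subfams_between_def)
      then show ?thesis using \<open>T = insert L (T - {L})\<close> by blast
    qed
  next
    fix T assume "T \<in> A \<union> insert L ` B"
    then show "T \<in> subfams_between (insert L F) lo hi"
      using weight_insert by (auto simp: A_def B_def subfams_between_def)
  qed
  moreover have "A \<inter> insert L ` B = {}" using L by (auto simp: A_def subfams_between_def)
  moreover have "inj_on (insert L) B" using L by (auto simp: B_def subfams_between_def inj_on_def)
  moreover have "finite A" "finite B" using F by (simp_all add: A_def B_def finite_subfams_between)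
  ultimately show ?thesis by (simp add: card_Un_disjoint card_image A_def B_def)
qed

text \<open>A family of transpositions has even weight, so only the even values in the window count.\<close>

lemma card_subfams_between_pairs:
  assumes F: "finite F" and pairs: "\<forall>C\<in>F. card C = 2"
  shows "int (card (subfams_between F lo hi)) = zbinom_sum (card F) ((lo + 1) div 2) (hi div 2)"
proof -
  define q where "q = card F"
  define J where "J = {j. j \<le> q \<and> (lo + 1) div 2 \<le> int j \<and> int j \<le> hi div 2}"
  have weight_pairs: "weight T = 2 * card T" if "T \<subseteq> F" for T
    using that pairs by (simp add: weight_def subset_iff)
  have window: "lo \<le> int (2 * j) \<and> int (2 * j) \<le> hi \<longleftrightarrow> (lo + 1) div 2 \<le> int j \<and> int j \<le> hi div 2" for j
    by presburger
  have "subfams_between F lo hi = (\<Union>j\<in>J. {T. T \<subseteq> F \<and> card T = j})"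
    using weight_pairs window card_mono[OF F] by (auto simp: subfams_between_def J_def q_def)
  moreover have "card (\<Union>j\<in>J. {T. T \<subseteq> F \<and> card T = j}) = (\<Sum>j\<in>J. card {T. T \<subseteq> F \<and> card T = j})"
    by (rule card_UN_disjoint) (use F in \<open>auto simp: J_def\<close>)
  ultimately have "card (subfams_between F lo hi) = (\<Sum>j\<in>J. q choose j)"
    using n_subsets[OF F] by (simp add: q_def)
  then have "int (card (subfams_between F lo hi)) = (\<Sum>j\<in>J. zbinom q (int j))"
    by (simp add: zbinom_def)
  also have "\<dots> = (\<Sum>i\<in>int ` J. zbinom q i)"
    by (simp add: sum.reindex)
  also have "int ` J = {i \<in> {(lo + 1) div 2..hi div 2}. 0 \<le> i \<and> i \<le> int q}"
  proof (intro set_eqI iffI)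
    fix i assume "i \<in> {i \<in> {(lo + 1) div 2..hi div 2}. 0 \<le> i \<and> i \<le> int q}"
    then have "nat i \<in> J" "i = int (nat i)" by (auto simp: J_def)
    then show "i \<in> int ` J" by blast
  qed (auto simp: J_def)
  also have "(\<Sum>i\<in>{i \<in> {(lo + 1) div 2..hi div 2}. 0 \<le> i \<and> i \<le> int q}. zbinom q i)
      = zbinom_sum q ((lo + 1) div 2) (hi div 2)"
    unfolding zbinom_sum_def by (rule sum.mono_neutral_left) (auto simp: zbinom_def binomial_eq_0)
  finally show ?thesis by (simp add: q_def)
qed

context ball_meet
begin

lemma card_meet_one_long_cycle:
  assumes L: "L \<in> cycles" and pairs: "\<forall>C\<in>cycles - {L}. card C = 2"
  defines "N \<equiv> \<lambda>lo hi. card (subfams_between (cycles - {L}) lo hi)" and "l \<equiv> int (card L)"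
  shows "card meet = N (int r - 1) (int r) + N (int r - 1 - l) (int r - l)
    + card L * N (int r + 1 - l) (int r - 2)"
proof -
  have cycles_eq: "cycles = insert L (cycles - {L})" using L by blast
  have fin: "finite (cycles - {L})" using finite_cycles by simp
  have "(\<Sum>C\<in>cycles. card C * card (subfams_between (cycles - {C}) (int r + 1 - int (card C)) (int r - 2)))
      = card L * N (int r + 1 - l) (int r - 2)"
    using pairs by (simp add: sum.remove[OF finite_cycles L] subfams_between_empty N_def l_def)
  then show ?thesis
    using card_meet cycles_eq card_subfams_between_insert[OF fin, of L]
    by (simp add: N_def l_def algebra_simps)
qed

lemma card_meet_two_long_cycles:
  assumes L: "L \<in> cycles" and M: "M \<in> cycles" "L \<noteq> M" "card M = 3"
    and pairs: "\<forall>C\<in>cycles - {L, M}. card C = 2"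
  defines "N \<equiv> \<lambda>lo hi. card (subfams_between (cycles - {L, M}) lo hi)" and "l \<equiv> int (card L)"
  shows "card meet = N (int r - 1) (int r) + N (int r - 4) (int r - 3)
      + N (int r - 1 - l) (int r - l) + N (int r - 4 - l) (int r - 3 - l)
    + card L * (N (int r + 1 - l) (int r - 2) + N (int r - 2 - l) (int r - 5))
    + 3 * (N (int r - 2) (int r - 2) + N (int r - 2 - l) (int r - 2 - l))"
proof -
  define Two where "Two = cycles - {L, M}"
  have fin: "finite Two" using finite_cycles by (simp add: Two_def)
  have notin: "L \<notin> insert M Two" "M \<notin> Two" "L \<notin> Two" using M by (auto simp: Two_def)
  have eqs: "cycles = insert L (insert M Two)" "cycles - {L} = insert M Two" "cycles - {M} = insert L Two"
    using L M by (auto simp: Two_def)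
  have ins: "card (subfams_between (insert C Two) lo hi)
      = card (subfams_between Two lo hi) + card (subfams_between Two (lo - int (card C)) (hi - int (card C)))"
    if "C \<notin> Two" for C lo hi using card_subfams_between_insert[OF fin that] .
  define f where "f C = card C * card (subfams_between (cycles - {C}) (int r + 1 - int (card C)) (int r - 2))" for C
  have "sum f Two = 0"
    using pairs by (simp add: f_def Two_def subfams_between_empty)
  moreover have "sum f cycles = f L + (f M + sum f Two)"
    using fin notin by (subst eqs(1)) simp
  ultimately have "sum f cycles
      = card L * card (subfams_between (insert M Two) (int r + 1 - l) (int r - 2))
        + 3 * card (subfams_between (insert L Two) (int r - 2) (int r - 2))"
    using M notin by (simp add: f_def eqs l_def insert_Diff_if)
  moreover have "card (subfams_between cycles lo hi)
      = card (subfams_between Two lo hi) + card (subfams_between Two (lo - 3) (hi - 3))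
        + card (subfams_between Two (lo - l) (hi - l)) + card (subfams_between Two (lo - 3 - l) (hi - 3 - l))" for lo hi
    using card_subfams_between_insert[OF finite_insert[THEN iffD2, OF fin] notin(1)]
    by (simp add: eqs(1) ins notin M l_def algebra_simps)
  ultimately show ?thesis
    using card_meet unfolding f_def[symmetric]
    by (simp add: eqs(2,3) ins notin M N_def Two_def[symmetric] l_def algebra_simps)
qed

end

section \<open>The cycle types \<open>I\<^sup>\<ell>\<close>\<close>

lemma image_mset_card_eq_add_mset:
  assumes F: "finite F" and e: "image_mset card (mset_set F) = add_mset a M"
  obtains L where "L \<in> F" "card L = a" "image_mset card (mset_set (F - {L})) = M"
proof -
  have "a \<in># image_mset card (mset_set F)" using e by simp
  then obtain L where L: "L \<in> F" "card L = a" using F by auto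
  have "image_mset card (mset_set (F - {L})) = image_mset card (mset_set F) - {#card L#}"
    using F L(1) by (simp add: mset_set_Diff image_mset_Diff)
  then show ?thesis using that L e by simp
qed

lemma image_mset_card_eq_replicate_mset:
  assumes "finite F" and "image_mset card (mset_set F) = replicate_mset q c"
  shows "\<forall>C\<in>F. card C = c" and "card F = q"
proof -
  show "\<forall>C\<in>F. card C = c"
  proof
    fix C assume "C \<in> F"
    then have "card C \<in># image_mset card (mset_set F)" using assms(1) by simp
    then show "card C = c" using assms(2) by (auto split: if_splits)
  qed
  show "card F = q" using arg_cong[OF assms(2), of size] by simp
qed

lemma I_type_odd: "2 \<le> s \<Longrightarrow> I_type r (2*s - 1) = add_mset (2*s - 1) (replicate_mset (r - s) 2)"
proof -
  assume "2 \<le> s"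
  then have "odd (2*s - 1)" "(2*s - 1 + 1) div 2 = s" by simp_all
  then show ?thesis unfolding I_type_def by simp
qed

lemma I_type_even: "I_type r (2*s) = add_mset (2*s) (add_mset 3 (replicate_mset (r - s - 2) 2))"
  unfolding I_type_def by simp

lemma sum_mset_I_type:
  assumes "admissible r l" shows "sum_mset (I_type r l) + 1 = 2 * r"
  using assms unfolding admissible_def
proof (elim disjE exE conjE)
  fix s assume s: "2 \<le> s" "s \<le> r" and l: "l = 2*s - 1"
  then have "I_type r l = add_mset (2*s - 1) (replicate_mset (r - s) 2)" using I_type_odd[of s r] by simp
  then show ?thesis using s by simp
qed (auto simp: I_type_even)

lemma (in perm_cycles) cycle_type_eq: "cycle_type p = image_mset card (mset_set cycles)"
  unfolding cycle_type_def cycles_def by simp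

lemma (in perm_cycles) sum_mset_cycle_type: "sum_mset (cycle_type p) = card moved"
  using weight_cycles by (simp add: cycle_type_eq weight_def sum_unfold_sum_mset)

lemma ball_meet_if_I_type:
  assumes "\<pi> \<in> Sym n" "admissible r l" "cycle_type \<pi> = I_type r l"
  shows "ball_meet \<pi> n r"
proof -
  interpret perm_cycles \<pi> n using assms(1) by (simp add: perm_cycles_def Sym_def)
  show ?thesis
    using sum_mset_cycle_type sum_mset_I_type[OF assms(2)] assms(3)
    by unfold_locales simp
qed

context ball_meet
begin

lemma card_meet_odd:
  assumes type: "cycle_type p = I_type r (2*s - 1)" and s: "2 \<le> s" "s \<le> r"
    and r: "r = 2*t + e" and e: "e \<le> 1"
  shows "int (card meet) = meet_odd e t s"
proof -
  obtain L where L: "L \<in> cycles" "card L = 2*s - 1"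
    and rest: "image_mset card (mset_set (cycles - {L})) = replicate_mset (r - s) 2"
    using type I_type_odd[OF s(1)] finite_cycles cycle_type_eq image_mset_card_eq_add_mset by metis
  have fin: "finite (cycles - {L})" using finite_cycles by simp
  note pairs = image_mset_card_eq_replicate_mset[OF fin rest]
  define q where "q = 2*t + e - s"
  have q: "card (cycles - {L}) = q" "int q = 2 * int t + int e - int s"
    using pairs(2) r s by (simp_all add: q_def)
  have l: "int (card L) = 2 * int s - 1" using L(2) s by simp
  have windows:
    "(int r - 1 + 1) div 2 = int t" "int r div 2 = int t"
    "(int r - 1 - (2 * int s - 1) + 1) div 2 = int t - int s + int e"
    "(int r - (2 * int s - 1)) div 2 = int t - int s + int e"
    "(int r + 1 - (2 * int s - 1) + 1) div 2 = int t - int s + 1 + int e"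
    "(int r - 2) div 2 = int t - 1"
    using r e by presburger+
  have "int (card meet) = zbinom_sum q (int t) (int t) + zbinom_sum q (int t - int s + int e) (int t - int s + int e)
      + (2 * int s - 1) * zbinom_sum q (int t - int s + 1 + int e) (int t - 1)"
    unfolding card_meet_one_long_cycle[OF L(1) pairs(1)] of_nat_add of_nat_mult
      card_subfams_between_pairs[OF fin pairs(1)] q(1) l windows ..
  moreover have "zbinom q (int t - int s + int e) = zbinom q (int t)"
    using q(2) by (auto intro: zbinom_symmetric_eq)
  ultimately show ?thesis unfolding meet_odd_def q_def by (simp add: zbinom_sum_singleton)
qed

lemma card_meet_even_windows:
  assumes type: "cycle_type p = I_type r (2*s)" and s: "2 \<le> s" "s + 2 \<le> r"
    and r: "r = 2*t + e" and e: "e \<le> 1"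
  defines "q \<equiv> 2*t + e - s - 2"
  shows "int (card meet) = zbinom_sum q (int t) (int t) + zbinom_sum q (int t - 2 + int e) (int t - 2 + int e)
      + zbinom_sum q (int t - int s) (int t - int s)
      + zbinom_sum q (int t - int s - 2 + int e) (int t - int s - 2 + int e)
      + 2 * int s * (zbinom_sum q (int t - int s + 1) (int t - 1) + zbinom_sum q (int t - int s - 1 + int e) (int t - 3 + int e))
      + 3 * (zbinom_sum q (int t - 1 + int e) (int t - 1) + zbinom_sum q (int t - int s - 1 + int e) (int t - int s - 1))"
proof -
  obtain L where L: "L \<in> cycles" "card L = 2*s"
    and rest1: "image_mset card (mset_set (cycles - {L})) = add_mset 3 (replicate_mset (r - s - 2) 2)"
    using type I_type_even finite_cycles cycle_type_eq image_mset_card_eq_add_mset by metis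
  obtain M where M: "M \<in> cycles - {L}" "card M = 3"
    and rest2: "image_mset card (mset_set (cycles - {L} - {M})) = replicate_mset (r - s - 2) 2"
    using rest1 finite_cycles image_mset_card_eq_add_mset[of "cycles - {L}"] by blast
  have M': "M \<in> cycles" "L \<noteq> M" using M(1) by auto
  have Two: "cycles - {L} - {M} = cycles - {L, M}" by blast
  have fin: "finite (cycles - {L, M})" using finite_cycles by simp
  note pairs = image_mset_card_eq_replicate_mset[OF fin rest2[unfolded Two]]
  have q: "card (cycles - {L, M}) = q" using pairs(2) r s by (simp add: q_def)
  have l: "int (card L) = 2 * int s" using L(2) by simp
  have windows:
    "(int r - 1 + 1) div 2 = int t" "int r div 2 = int t"
    "(int r - 4 + 1) div 2 = int t - 2 + int e" "(int r - 3) div 2 = int t - 2 + int e"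
    "(int r - 1 - 2 * int s + 1) div 2 = int t - int s" "(int r - 2 * int s) div 2 = int t - int s"
    "(int r - 4 - 2 * int s + 1) div 2 = int t - int s - 2 + int e"
    "(int r - 3 - 2 * int s) div 2 = int t - int s - 2 + int e"
    "(int r + 1 - 2 * int s + 1) div 2 = int t - int s + 1" "(int r - 2) div 2 = int t - 1"
    "(int r - 2 - 2 * int s + 1) div 2 = int t - int s - 1 + int e" "(int r - 5) div 2 = int t - 3 + int e"
    "(int r - 2 + 1) div 2 = int t - 1 + int e"
    "(int r - 2 - 2 * int s) div 2 = int t - int s - 1"
    using r e by presburger+
  show ?thesis
    unfolding card_meet_two_long_cycles[OF L(1) M' M(2) pairs(1)] of_nat_add of_nat_mult
      card_subfams_between_pairs[OF fin pairs(1)] q l windows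
    by (simp add: algebra_simps)
qed

lemma card_meet_even:
  assumes type: "cycle_type p = I_type r (2*s)" and s: "2 \<le> s" "s + 2 \<le> r"
    and r: "r = 2*t + e" and e: "e \<le> 1"
  shows "int (card meet) = (if e = 0 then meet_even0 t s else meet_even1 t s)"
proof -
  define q where "q = 2*t + e - s - 2"
  have q: "int q = 2 * int t + int e - int s - 2" using r s by (simp add: q_def)
  note raw = card_meet_even_windows[OF type s r e, folded q_def]
  show ?thesis
  proof (cases "e = 0")
    case True
    have "zbinom q (int t - int s) = zbinom q (int t - 2)" "zbinom q (int t - int s - 2) = zbinom q (int t)"
      "zbinom q (int t - int s - 1) = zbinom q (int t - 1)"
      using q True by (auto intro: zbinom_symmetric_eq)
    then show ?thesis
      using raw True unfolding meet_even0_def q_def by (simp add: zbinom_sum_singleton algebra_simps)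
  next
    case False
    then have "e = 1" using e by simp
    have "zbinom q (int t - int s) = zbinom q (int t - 1)" "zbinom q (int t - int s - 1) = zbinom q (int t)"
      using q \<open>e = 1\<close> by (auto intro: zbinom_symmetric_eq)
    then show ?thesis
      using raw \<open>e = 1\<close> unfolding meet_even1_def q_def by (simp add: zbinom_sum_singleton zbinom_sum_empty algebra_simps)
  qed
qed

end

definition cycle_and_transposition_cases :: "nat \<Rightarrow> nat \<Rightarrow> nat \<Rightarrow> nat" where
  "cycle_and_transposition_cases l N i =
    (if 1 \<le> i \<and> i < l then i + 1 else if i = l then 1
     else if l < i \<and> i \<le> N then (if even i then i + 1 else i - 1) else i)"

locale odd_cycle_type =
  fixes l N :: nat
  assumes l_ge_3: "3 \<le> l" and l_le_N: "l \<le> N" and odd_l: "odd l" and odd_N: "odd N"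
begin

abbreviation "c \<equiv> cycle_and_transposition_cases l N"

lemma c_below_l: "1 \<le> i \<Longrightarrow> i < l \<Longrightarrow> c i = i + 1"
  by (simp add: cycle_and_transposition_cases_def)

lemma c_l: "c l = 1"
  using l_ge_3 by (simp add: cycle_and_transposition_cases_def)

lemma c_even: "l < i \<Longrightarrow> i \<le> N \<Longrightarrow> even i \<Longrightarrow> c i = i + 1 \<and> i + 1 \<le> N"
  using odd_N by (cases "i = N") (auto simp: cycle_and_transposition_cases_def)

lemma c_odd: "l < i \<Longrightarrow> i \<le> N \<Longrightarrow> odd i \<Longrightarrow> c i = i - 1 \<and> l < i - 1"
  using odd_l by (cases "i = l + 1") (auto simp: cycle_and_transposition_cases_def)

lemma c_outside: "i = 0 \<or> N < i \<Longrightarrow> c i = i"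
  using l_ge_3 l_le_N by (auto simp: cycle_and_transposition_cases_def)

lemma position_cases:
  obtains "i = 0" | "1 \<le> i" "i < l" | "i = l" | "l < i" "i \<le> N" "even i" | "l < i" "i \<le> N" "odd i" | "N < i"
  by (metis One_nat_def less_one linorder_neqE_nat not_le)

lemma c_c_transposition: "l < i \<Longrightarrow> i \<le> N \<Longrightarrow> c (c i) = i"
  using c_even c_odd by (cases "even i") auto

lemma c_Sym: "N \<le> n \<Longrightarrow> c \<in> Sym n"
proof (rule SymI)
  assume N: "N \<le> n"
  fix i
  show "i \<notin> {1..n} \<Longrightarrow> c i = i" using N c_outside[of i] by auto
  show "c i \<in> {1..n}" if "i \<in> {1..n}"
  proof (cases rule: position_cases[of i])
    case 4
    then show ?thesis using c_even[of i] N by auto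
  next
    case 5
    then show ?thesis using c_odd[of i] N by auto
  qed (use that N l_le_N c_below_l c_l c_outside in auto)
next
  define c' where "c' i = (if 1 < i \<and> i \<le> l then i - 1 else if i = 1 then l else c i)" for i
  have "c' (c i) = i" if "i \<in> {1..n}" for i
  proof (cases rule: position_cases[of i])
    case 2
    then show ?thesis using c_below_l[of i] by (simp add: c'_def)
  next
    case 3
    then show ?thesis using c_l by (simp add: c'_def)
  next
    case 4
    then have "l < c i" using c_even[of i] by simp
    then show ?thesis using c_c_transposition[of i] 4 l_ge_3 by (simp add: c'_def)
  next
    case 5
    then have "l < c i" using c_odd[of i] by simp
    then show ?thesis using c_c_transposition[of i] 5 l_ge_3 by (simp add: c'_def)
  next
    case 6
    then show ?thesis using c_outside[of i] l_le_N l_ge_3 by (simp add: c'_def)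
  qed (use that in simp)
  then show "inj_on c {1..n}" by (rule inj_on_inverseI)
qed

lemma c_moved: "c i \<noteq> i \<longleftrightarrow> i \<in> {1..N}"
proof (cases rule: position_cases[of i])
  case 4
  then show ?thesis using c_even[of i] by simp
next
  case 5
  then show ?thesis using c_odd[of i] by auto
qed (use l_ge_3 l_le_N c_below_l c_l c_outside in auto)

lemma orbit_c_1: "orbit c 1 = {1..l}"
proof -
  have funpow: "(c ^^ m) 1 = m + 1" if "m < l" for m
    using that by (induction m) (simp_all add: c_below_l)
  have "(c ^^ Suc (l - 1)) 1 = c ((c ^^ (l - 1)) 1)" by simp
  moreover have "Suc (l - 1) = l" "(c ^^ (l - 1)) 1 = l" using l_ge_3 funpow[of "l - 1"] by simp_all
  ultimately have "(c ^^ l) 1 = 1" using c_l by simp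
  then have "orbit c 1 = {(c ^^ m) 1 | m. m < l}"
    by (rule orbit_altdef_bounded) (use l_ge_3 in simp)
  also have "\<dots> = {1..l}"
  proof (intro set_eqI iffI)
    fix i assume "i \<in> {1..l}"
    then have "i = (c ^^ (i - 1)) 1" "i - 1 < l" using funpow[of "i - 1"] by auto
    then show "i \<in> {(c ^^ m) 1 | m. m < l}" by blast
  qed (use funpow in auto)
  finally show ?thesis .
qed

lemma orbit_c_transposition: "l < i \<Longrightarrow> i \<le> N \<Longrightarrow> orbit c i = {i, c i}"
proof -
  assume i: "l < i" "i \<le> N"
  have "(c ^^ 2) i = i" using c_c_transposition[OF i] by (simp add: numeral_2_eq_2)
  then have "orbit c i = {(c ^^ m) i | m. m < 2}" by (rule orbit_altdef_bounded) simp
  also have "\<dots> = {i, c i}"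
  proof (intro set_eqI iffI)
    fix j assume "j \<in> {i, c i}"
    then have "j = (c ^^ 0) i \<or> j = (c ^^ 1) i" by auto
    then show "j \<in> {(c ^^ m) i | m. m < 2}" by fastforce
  qed (auto simp: numeral_2_eq_2 less_Suc_eq)
  finally show ?thesis .
qed

lemma cycle_type_c:
  assumes "N \<le> n"
  shows "cycle_type c = add_mset l (replicate_mset ((N - l) div 2) 2)"
proof -
  interpret perm_cycles c n using c_Sym[OF assms] by (simp add: perm_cycles_def Sym_def)
  have moved: "moved = {1..N}" unfolding moved_def using c_moved by blast
  have long: "{1..l} \<in> cycles" using orbit_in_cycles[of 1] orbit_c_1 moved l_le_N l_ge_3 by simp
  have pairs: "\<forall>C\<in>cycles - {{1..l}}. card C = 2"
  proof
    fix C assume C: "C \<in> cycles - {{1..l}}"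
    then obtain i where i: "i \<in> moved" "C = orbit c i" unfolding cycles_eq_image by blast
    have "l < i"
    proof (rule ccontr)
      assume "\<not> l < i"
      then have "i \<in> orbit c 1" using i moved orbit_c_1 by auto
      then have "C = {1..l}" using i orbit_eq orbit_c_1 by simp
      then show False using C by simp
    qed
    moreover have "i \<le> N" "c i \<noteq> i" using i moved by (auto simp: moved_def)
    ultimately show "card C = 2" using i(2) orbit_c_transposition by simp
  qed
  have fin: "finite (cycles - {{1..l}})" using finite_cycles by simp
  have "sum card (cycles - {{1..l}}) = sum (\<lambda>_. 2) (cycles - {{1..l}})"
    using pairs by (intro sum.cong) auto
  then have "N = l + 2 * card (cycles - {{1..l}})"
    using weight_cycles moved sum.remove[OF finite_cycles long, of card] l_ge_3
    by (simp add: weight_def)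
  then have "(N - l) div 2 = card (cycles - {{1..l}})" by simp
  moreover have "image_mset card (mset_set (cycles - {{1..l}})) = replicate_mset (card (cycles - {{1..l}})) 2"
  proof -
    have "image_mset card (mset_set (cycles - {{1..l}})) = image_mset (\<lambda>_. 2) (mset_set (cycles - {{1..l}}))"
      using pairs fin by (intro image_mset_cong) auto
    then show ?thesis by (simp add: image_mset_const_eq)
  qed
  ultimately show ?thesis
    using mset_set.remove[OF finite_cycles long] by (simp add: cycle_type_eq)
qed

end

lemma exists_I_type_odd:
  assumes "2 \<le> s" "s \<le> r" "2*r - 1 \<le> n"
  shows "\<exists>\<pi>\<in>Sym n. cycle_type \<pi> = I_type r (2*s - 1)"
proof -
  interpret odd_cycle_type "2*s - 1" "2*r - 1" using assms by unfold_locales auto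
  have "(2*r - 1 - (2*s - 1)) div 2 = r - s" using assms by simp
  then have "cycle_type c = I_type r (2*s - 1)"
    using cycle_type_c[OF assms(3)] I_type_odd[OF assms(1)] by simp
  then show ?thesis using c_Sym[OF assms(3)] by blast
qed

lemma (in ball_meet) card_meet_le_peak:
  assumes "admissible r l" "cycle_type p = I_type r l" "r = 2*t + e" "e \<le> 1" "2 \<le> t"
  shows "int (card meet) \<le> meet_odd e t (3 + e)"
  using assms(1) unfolding admissible_def
proof (elim disjE exE conjE)
  fix s assume s: "2 \<le> s" "s \<le> r" "l = 2*s - 1"
  then have "int (card meet) = meet_odd e t s" using card_meet_odd assms(2-4) by simp
  also have "\<dots> \<le> meet_odd e t (3 + e)" using meet_odd_le_peak s assms(3-5) by simp
  finally show ?thesis .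
next
  fix s assume s: "2 \<le> s" "s + 2 \<le> r" "l = 2*s"
  have card: "int (card meet) = (if e = 0 then meet_even0 t s else meet_even1 t s)"
    using card_meet_even[of s t e] s assms(2-4) by simp
  have "int (card meet) \<le> meet_odd e t (s + 1)"
  proof (cases "e = 0")
    case True
    then show ?thesis using card meet_even0_le_meet_odd[of s t] s assms(3) by simp
  next
    case False
    then have "e = 1" using assms(4) by simp
    then show ?thesis using card meet_even1_le_meet_odd[of s t] s assms(3) by simp
  qed
  also have "\<dots> \<le> meet_odd e t (3 + e)" using meet_odd_le_peak[of e t "s + 1"] s assms(3-5) by simp
  finally show ?thesis .
qed

theorem lemma15:
  fixes t r n :: nat
  assumes "t \<ge> 2" and "r = 2*t \<or> r = 2*t + 1" and "n \<ge> 2*r - 1"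
  defines "lstar \<equiv> (if r = 2*t then 5 else 7::nat)"
  shows "(\<forall>l \<pi>. admissible r l \<longrightarrow> \<pi> \<in> Sym n \<longrightarrow> cycle_type \<pi> = I_type r l \<longrightarrow>
            card (ball_r n r \<pi> \<inter> ball_r n r id)
              \<le> 2 * ((2*t - 3) choose t) + lstar * ((2*t - 2) choose (t - 1)))
       \<and> admissible r lstar
       \<and> (\<exists>\<pi> \<in> Sym n. cycle_type \<pi> = I_type r lstar \<and>
            card (ball_r n r \<pi> \<inter> ball_r n r id)
              = 2 * ((2*t - 3) choose t) + lstar * ((2*t - 2) choose (t - 1)))"
proof -
  define F where "F = 2 * ((2*t - 3) choose t) + lstar * ((2*t - 2) choose (t - 1))"
  define e where "e = r - 2*t"
  have r: "r = 2*t + e" "e \<le> 1" and lstar: "lstar = 2 * (3 + e) - 1"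
    using assms(2) by (auto simp: e_def lstar_def)
  have peak: "meet_odd e t (3 + e) = int F"
    using meet_odd_peak[OF assms(1)] lstar by (simp add: F_def)
  have bound: "card (ball_r n r \<pi> \<inter> ball_r n r id) \<le> F"
    if "admissible r l" "\<pi> \<in> Sym n" "cycle_type \<pi> = I_type r l" for l \<pi>
  proof -
    interpret ball_meet \<pi> n r using ball_meet_if_I_type[OF that(2,1,3)] .
    show ?thesis using card_meet_le_peak[OF that(1,3) r assms(1)] peak by (simp add: meet_def)
  qed
  have s: "2 \<le> 3 + e" "3 + e \<le> r" using r assms(1) by auto
  then have adm: "admissible r lstar" unfolding admissible_def lstar by blast
  obtain \<pi> where \<pi>: "\<pi> \<in> Sym n" "cycle_type \<pi> = I_type r lstar"
    using exists_I_type_odd[OF s assms(3)] lstar by blast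
  interpret ball_meet \<pi> n r using ball_meet_if_I_type[OF \<pi>(1) adm \<pi>(2)] .
  have "int (card (ball_r n r \<pi> \<inter> ball_r n r id)) = int F"
    using card_meet_odd[OF _ s r] \<pi>(2) lstar peak by (simp add: meet_def)
  then have "card (ball_r n r \<pi> \<inter> ball_r n r id) = F" by (simp only: of_nat_eq_iff)
  then show ?thesis using bound adm \<pi> unfolding F_def by blast
qed

end
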